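(* Let $R$ be an involutive commutative semiring (with $0 \neq 1$), let $(K,\oplus,0)$ be a finite abelian group of order $d$ and exponent $k$, with $d$ invertible in $R$, and let $K$ be a subgroup of an abelian group $(P,\oplus,0)$ (in the paper: $K$ is the group of $X$-classical points, $P$ the group of $Z$-phases). Let $$\bigoplus_{r=1}^M n_r y_r = a, \qquad a \in K,$$ be an equation with positive integer coefficients $n_r$, admitting a solution $y_r := a_r$ in $P$, where the $a_r$ are pairwise distinct and non-zero. Choose $N \geq \sum_{r=1}^M n_r$ with $N \equiv 1 \pmod k$, set $n_0 := N - \sum_{r=1}^M n_r$, $a_0 := 0$, for $i = 1,\dots,N$ let $R(i)$ be the least $R' \geq 0$ with $i \leq \sum_{r=0}^{R'} n_r$, and put $\alpha_i := a_{R(i)}$; indices of $\alpha$ are read modulo $N$ with residues in $\{1,\dots,N\}$. Consider the measurement scenario with measurements $\mathcal{X} = \bigsqcup_{i=1}^N \{X_i^{0}, X_i^{a_1},\dots,X_i^{a_M}\}$, each with outcome set $K$, and measurement contexts $C_{control} = \{X_i^0 : i = 1,\dots,N\}$ and $C_{var_v} = \{X_i^{\alpha_{i+v-1}} : i=1,\dots,N\}$ for $v = 1,\dots,N$. Let $(e_C)$ be the $R$-valued empirical model (the outcome distribution of the Mermin measurement contexts on the $N$-partite GHZ state) given, for $\underline{b} \in K^C$, by $e_{C_{control}}(\underline{b}) = 1/d^{N-1}$ if $\bigoplus_{i} b_i = 0$ and $0$ otherwise, and $e_{C_{var_v}}(\underline{b}) = 1/d^{N-1}$ if $\bigoplus_i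 b_i = a$ and $0$ otherwise. Assume $R$ admits a semiring morphism $p: R \to \mathbb{B}$ with $p(1/d) = 1$. Then $(e_C)$ is $\mathrm{AvN}_{\mathbb{Z},K}$ if and only if the equation $\bigoplus_{r=1}^M n_r y_r = a$ admits no solution in $K$.
   Context: $\mathbb{B} = (\{0,1\},\vee,0,\wedge,1)$ is the boolean semiring. The possibilistic model associated with $(e_C)$ is $(p\circ e_C)$; its support on a context $C$ is $\mathcal{S}(C) := \{\underline{b} \in K^C : p(e_C(\underline{b})) = 1\}$. A $\mathbb{Z}$-linear equation valued in $K$ is a triple $\phi = (C, n, b)$ with $C$ a finite set, $n: C \to \mathbb{Z}$ and $b \in K$; an assignment $s: C \to K$ satisfies $\phi$ if $\bigoplus_{m \in C} n(m) s(m) = b$ in $K$. For a set $W$ of assignments $C \to K$, $\mathbb{T}_{\mathbb{Z}}(W)$ is the set of $\mathbb{Z}$-linear equations with index set $C$ satisfied by every $s \in W$. The model is $\mathrm{AvN}_{\mathbb{Z},K}$ (All-vs-Nothing) if there is no global assignment $s: \mathcal{X} \to K$ such that, for every context $C$ and every $\phi \in \mathbb{T}_{\mathbb{Z}}(\mathcal{S}(C))$, the restriction $s|_C$ satisfies $\phi$. *)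

theory Defs
  imports Main "HOL-Library.FuncSet"
begin

definition natmult :: "nat \<Rightarrow> 'a::monoid_add \<Rightarrow> 'a" where
  "natmult m x = (((+) x) ^^ m) 0"

definition intmult :: "int \<Rightarrow> 'a::ab_group_add \<Rightarrow> 'a" where
  "intmult z x = (if 0 \<le> z then natmult (nat z) x else - natmult (nat (- z)) x)"

definition is_subgroup :: "'a::ab_group_add set \<Rightarrow> bool" where
  "is_subgroup K \<longleftrightarrow> 0 \<in> K \<and> (\<forall>x\<in>K. \<forall>y\<in>K. x + y \<in> K) \<and> (\<forall>x\<in>K. - x \<in> K)"

definition group_exponent :: "'a::ab_group_add set \<Rightarrow> nat" where
  "group_exponent K = (LEAST k. 0 < k \<and> (\<forall>x\<in>K. natmult k x = 0))"

definition involutive_semiring :: "('r::comm_semiring_1 \<Rightarrow> 'r) \<Rightarrow> bool" where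
  "involutive_semiring invol \<longleftrightarrow>
     (\<forall>x. invol (invol x) = x) \<and> (\<forall>x y. invol (x + y) = invol x + invol y) \<and>
     (\<forall>x y. invol (x * y) = invol x * invol y) \<and> invol 0 = 0 \<and> invol 1 = 1"

definition bool_semiring_hom :: "('r::comm_semiring_1 \<Rightarrow> bool) \<Rightarrow> bool" where
  "bool_semiring_hom p \<longleftrightarrow> p 0 = False \<and> p 1 = True \<and>
     (\<forall>x y. p (x + y) = (p x \<or> p y)) \<and> (\<forall>x y. p (x * y) = (p x \<and> p y))"

definition sat_eq :: "'m set \<Rightarrow> ('m \<Rightarrow> int) \<Rightarrow> 'p::ab_group_add \<Rightarrow> ('m \<Rightarrow> 'p) \<Rightarrow> bool" where
  "sat_eq C n b s \<longleftrightarrow> (\<Sum>m\<in>C. intmult (n m) (s m)) = b"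

definition T_Z :: "'p::ab_group_add set \<Rightarrow> 'm set \<Rightarrow> ('m \<Rightarrow> 'p) set \<Rightarrow> (('m \<Rightarrow> int) \<times> 'p) set" where
  "T_Z K C W = {(n, b). n \<in> extensional C \<and> b \<in> K \<and> (\<forall>s\<in>W. sat_eq C n b s)}"

definition support :: "('r \<Rightarrow> bool) \<Rightarrow> 'p set \<Rightarrow> 'm set \<Rightarrow> (('m \<Rightarrow> 'p) \<Rightarrow> 'r) \<Rightarrow> ('m \<Rightarrow> 'p) set" where
  "support p K C eC = {b \<in> C \<rightarrow>\<^sub>E K. p (eC b)}"

text \<open>AvN_{Z,K}: contexts are labelled by Cs, ctx gives the measurement set of each
  context, e gives the empirical model on each context.\<close>
definition AvN_ZK :: "'p::ab_group_add set \<Rightarrow> 'm set \<Rightarrow> 'c set \<Rightarrow> ('c \<Rightarrow> 'm set)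
    \<Rightarrow> ('c \<Rightarrow> ('m \<Rightarrow> 'p) \<Rightarrow> 'r) \<Rightarrow> ('r \<Rightarrow> bool) \<Rightarrow> bool" where
  "AvN_ZK K X Cs ctx e p \<longleftrightarrow>
     \<not> (\<exists>s \<in> X \<rightarrow>\<^sub>E K. \<forall>c\<in>Cs. \<forall>(n, b) \<in> T_Z K (ctx c) (support p K (ctx c) (e c)).
            sat_eq (ctx c) n b (restrict s (ctx c)))"

definition nn :: "nat \<Rightarrow> nat \<Rightarrow> (nat \<Rightarrow> nat) \<Rightarrow> nat \<Rightarrow> nat" where
  "nn N M n r = (if r = 0 then N - (\<Sum>s=1..M. n s) else n r)"

definition Ridx :: "nat \<Rightarrow> nat \<Rightarrow> (nat \<Rightarrow> nat) \<Rightarrow> nat \<Rightarrow> nat" where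
  "Ridx N M n i = (LEAST R'. i \<le> (\<Sum>r=0..R'. nn N M n r))"

definition alpha :: "nat \<Rightarrow> nat \<Rightarrow> (nat \<Rightarrow> nat) \<Rightarrow> (nat \<Rightarrow> 'p::zero) \<Rightarrow> nat \<Rightarrow> 'p" where
  "alpha N M n as i = (if Ridx N M n i = 0 then 0 else as (Ridx N M n i))"

text \<open>Index read modulo N with residues in {1..N} (for j >= 1).\<close>
definition alpha_mod :: "nat \<Rightarrow> nat \<Rightarrow> (nat \<Rightarrow> nat) \<Rightarrow> (nat \<Rightarrow> 'p::zero) \<Rightarrow> nat \<Rightarrow> 'p" where
  "alpha_mod N M n as j = alpha N M n as ((j - 1) mod N + 1)"

text \<open>Measurement X_i^c is represented by the pair (i, c).\<close>
definition meas :: "nat \<Rightarrow> nat \<Rightarrow> (nat \<Rightarrow> 'p::zero) \<Rightarrow> (nat \<times> 'p) set" where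
  "meas N M as = {1..N} \<times> ({0} \<union> as ` {1..M})"

datatype mctx = Control | Var nat

definition ctxs :: "nat \<Rightarrow> mctx set" where
  "ctxs N = insert Control (Var ` {1..N})"

definition ctx :: "nat \<Rightarrow> nat \<Rightarrow> (nat \<Rightarrow> nat) \<Rightarrow> (nat \<Rightarrow> 'p::zero) \<Rightarrow> mctx \<Rightarrow> (nat \<times> 'p) set" where
  "ctx N M n as c = (case c of
      Control \<Rightarrow> {(i, 0) | i. i \<in> {1..N}}
    | Var v \<Rightarrow> {(i, alpha_mod N M n as (i + v - 1)) | i. i \<in> {1..N}})"

text \<open>The empirical model: dinv stands for 1/d; b is summed over the context.\<close>
definition emp :: "nat \<Rightarrow> nat \<Rightarrow> (nat \<Rightarrow> nat) \<Rightarrow> (nat \<Rightarrow> 'p::ab_group_add) \<Rightarrow> 'p \<Rightarrow> 'r::comm_semiring_1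
     \<Rightarrow> mctx \<Rightarrow> ((nat \<times> 'p) \<Rightarrow> 'p) \<Rightarrow> 'r" where
  "emp N M n as a dinv c b =
     (if (\<Sum>m\<in>ctx N M n as c. b m) = (case c of Control \<Rightarrow> 0 | Var v \<Rightarrow> a)
      then dinv ^ (N - 1) else 0)"

end

theory Submission
  imports Defs "HOL-Number_Theory.Cong"
begin

text \<open>
  Possibilistically, the support of each context consists of the outcomes whose sum is the
  prescribed value (0 for the control context, a for the others), and the only equations of
  \<open>T\<^sub>\<int>\<close> that matter are these sum constraints. A global assignment is therefore a table
  \<open>s(i, c)\<close> with \<open>\<Sum>\<^sub>i s(i, 0) = 0\<close> and \<open>\<Sum>\<^sub>i s(i, \<alpha>(i + v - 1)) = a\<close> for every shift v. Since \<alpha>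
  takes the value \<open>a\<^sub>r\<close> exactly \<open>n\<^sub>r\<close> times, adding the N shifted constraints and subtracting \<open>n\<^sub>0\<close>
  times the control constraint gives \<open>\<Sum>\<^sub>r n\<^sub>r y\<^sub>r = N a = a\<close> for \<open>y\<^sub>r = \<Sum>\<^sub>i s(i, a\<^sub>r)\<close>, as \<open>N \<equiv> 1\<close>
  modulo the exponent. Conversely, a solution y in K yields the global assignment
  \<open>s(i, a\<^sub>r) = y\<^sub>r\<close>, \<open>s(i, 0) = 0\<close>.
\<close>

lemma natmult_0 [simp]: "natmult 0 x = 0"
  by (simp add: natmult_def)

lemma natmult_Suc [simp]: "natmult (Suc m) x = x + natmult m x"
  by (simp add: natmult_def)

lemma natmult_1 [simp]: "natmult 1 x = x"
  by (simp add: natmult_def)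

lemma natmult_zero_right [simp]: "natmult m (0::'a::monoid_add) = 0"
  by (induct m) simp_all

lemma natmult_add: "natmult (i + j) (x::'a::comm_monoid_add) = natmult i x + natmult j x"
  by (induct i) (simp_all add: add.assoc)

lemma natmult_mult: "natmult (i * j) (x::'a::comm_monoid_add) = natmult i (natmult j x)"
  by (induct i) (simp_all add: natmult_add)

lemma natmult_sum: "natmult m (\<Sum>i\<in>A. f i) = (\<Sum>i\<in>A. natmult m (f i :: 'a::comm_monoid_add))"
  by (induct m) (simp_all add: sum.distrib)

lemma sum_constant_natmult: "finite A \<Longrightarrow> (\<Sum>i\<in>A. (c::'a::comm_monoid_add)) = natmult (card A) c"
  by (induct A rule: finite_induct) simp_all

lemma intmult_1 [simp]: "intmult 1 x = x"
  by (simp add: intmult_def)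

lemma subgroup_natmult_closed: "is_subgroup K \<Longrightarrow> x \<in> K \<Longrightarrow> natmult m x \<in> K"
  by (induct m) (auto simp: is_subgroup_def)

lemma subgroup_sum_closed:
  assumes "is_subgroup K" and "\<And>i. i \<in> A \<Longrightarrow> f i \<in> K"
  shows "sum f A \<in> K"
proof (cases "finite A")
  case True
  then show ?thesis using assms by (induct A rule: finite_induct) (auto simp: is_subgroup_def)
next
  case False
  then show ?thesis using assms(1) by (simp add: is_subgroup_def)
qed

section \<open>The exponent of a finite group\<close>

lemma finite_subgroup_natmult_eq_0:
  assumes "finite K" "is_subgroup K" "x \<in> K"
  shows "\<exists>d. 1 \<le> d \<and> d \<le> card K \<and> natmult d x = 0"
proof -
  have "(\<lambda>m. natmult m x) ` {0..card K} \<subseteq> K"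
    using subgroup_natmult_closed[OF assms(2,3)] by auto
  then have "\<not> inj_on (\<lambda>m. natmult m x) {0..card K}"
    using card_inj_on_le[OF _ _ assms(1)] by fastforce
  then obtain i j where ij: "i < j" "j \<le> card K" "natmult i x = natmult j x"
    unfolding inj_on_def by (metis atLeastAtMost_iff linorder_neqE_nat)
  have "natmult j x = natmult i x + natmult (j - i) x"
    using natmult_add[of i "j - i" x] ij(1) by simp
  with ij show ?thesis by (intro exI[of _ "j - i"]) auto
qed

lemma finite_subgroup_has_exponent:
  assumes "finite K" "is_subgroup K"
  shows "\<exists>k. 0 < k \<and> (\<forall>x\<in>K. natmult k x = 0)"
proof (intro exI[of _ "fact (card K)"] conjI ballI)
  show "0 < (fact (card K) :: nat)"
    by simp
  fix x assume "x \<in> K"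
  then obtain d where d: "1 \<le> d" "d \<le> card K" "natmult d x = 0"
    using finite_subgroup_natmult_eq_0[OF assms] by blast
  then obtain q where "fact (card K) = q * d"
    using dvd_fact[OF d(1,2)] by (auto simp: dvd_def mult.commute)
  with d(3) show "natmult (fact (card K)) x = 0"
    by (simp add: natmult_mult)
qed

lemma natmult_mod_group_exponent:
  assumes "finite K" "is_subgroup K" "x \<in> K"
  shows "natmult (m mod group_exponent K) x = natmult m x"
proof -
  define k where "k = group_exponent K"
  have "natmult k x = 0"
    using LeastI_ex[OF finite_subgroup_has_exponent[OF assms(1,2)]] assms(3)
    unfolding k_def group_exponent_def by blast
  then have "natmult m x = natmult ((m div k) * k) x + natmult (m mod k) x"
    by (metis natmult_add div_mult_mod_eq)
  also have "\<dots> = natmult (m mod k) x"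
    using \<open>natmult k x = 0\<close> by (simp add: natmult_mult)
  finally show ?thesis
    by (simp add: k_def)
qed

lemma natmult_congruent_one:
  assumes "finite K" "is_subgroup K" "x \<in> K"
    and "m mod group_exponent K = 1 mod group_exponent K"
  shows "natmult m x = x"
  using natmult_mod_group_exponent[OF assms(1-3), of m] natmult_mod_group_exponent[OF assms(1-3), of 1]
    assms(4) by simp

lemma sum_mod_shift:
  fixes H :: "nat \<Rightarrow> 'a::comm_monoid_add"
  shows "(\<Sum>i<N. H ((i + c) mod N)) = (\<Sum>i<N. H i)"
proof (cases "N = 0")
  case False
  let ?shift = "\<lambda>i. (i + c) mod N"
  have inj: "inj_on ?shift {..<N}"
    unfolding inj_on_def by (metis lessThan_iff cong_add_rcancel_nat cong_def mod_less)
  moreover have "?shift ` {..<N} \<subseteq> {..<N}"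
    using False by auto
  ultimately have "?shift ` {..<N} = {..<N}"
    using endo_inj_surj by blast
  then show ?thesis
    using sum.reindex[OF inj, of H] by simp
qed simp

lemma sum_alpha_mod_shift:
  fixes G :: "'p::zero \<Rightarrow> 'a::comm_monoid_add"
  assumes "1 \<le> v"
  shows "(\<Sum>i=1..N. G (alpha_mod N M n as (i + v - 1))) = (\<Sum>j=1..N. G (alpha N M n as j))"
proof -
  have "(\<Sum>i=1..N. G (alpha_mod N M n as (i + v - 1)))
      = (\<Sum>k<N. G (alpha N M n as (Suc ((k + (v - 1)) mod N))))"
    using assms by (simp add: sum.atLeast1_atMost_eq alpha_mod_def)
  also have "\<dots> = (\<Sum>k<N. G (alpha N M n as (Suc k)))"
    by (rule sum_mod_shift[where H = "\<lambda>i. G (alpha N M n as (Suc i))"])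
  finally show ?thesis
    by (simp add: sum.atLeast1_atMost_eq)
qed

section \<open>Counting the values of \<open>\<alpha>\<close>\<close>

lemma sum_nn_eq:
  assumes "(\<Sum>r=1..M. n r) \<le> N"
  shows "(\<Sum>r=0..M. nn N M n r) = N"
proof -
  have "(\<Sum>r=0..M. nn N M n r) = nn N M n 0 + (\<Sum>r=Suc 0..M. nn N M n r)"
    by (rule sum.atLeast_Suc_atMost) simp
  also have "(\<Sum>r=Suc 0..M. nn N M n r) = (\<Sum>r=1..M. n r)"
    by (intro sum.cong) (auto simp: nn_def)
  finally show ?thesis
    using assms by (simp add: nn_def)
qed

lemma Ridx_le:
  assumes "(\<Sum>r=1..M. n r) \<le> N" "j \<le> N"
  shows "Ridx N M n j \<le> M"
  unfolding Ridx_def by (rule Least_le) (use sum_nn_eq[OF assms(1)] assms(2) in simp)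

lemma Ridx_eq_Suc:
  assumes "(\<Sum>r=0..R. nn N M n r) < j" "j \<le> (\<Sum>r=0..Suc R. nn N M n r)"
  shows "Ridx N M n j = Suc R"
  unfolding Ridx_def
proof (rule Least_equality)
  fix y assume y: "j \<le> (\<Sum>r=0..y. nn N M n r)"
  show "Suc R \<le> y"
  proof (rule ccontr)
    assume "\<not> Suc R \<le> y"
    then have "(\<Sum>r=0..y. nn N M n r) \<le> (\<Sum>r=0..R. nn N M n r)"
      by (intro sum_mono2) auto
    with assms(1) y show False
      by simp
  qed
qed (fact assms(2))

text \<open>\<open>Ridx\<close> is constant equal to r on the r-th block of \<open>nn N M n r\<close> consecutive indices.\<close>
lemma sum_Ridx_blocks:
  fixes h :: "nat \<Rightarrow> 'a::comm_monoid_add"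
  shows "(\<Sum>j=1..(\<Sum>r=0..R. nn N M n r). h (Ridx N M n j)) = (\<Sum>r=0..R. natmult (nn N M n r) (h r))"
proof (induct R)
  case 0
  have "(\<Sum>j=1..nn N M n 0. h (Ridx N M n j)) = (\<Sum>j=1..nn N M n 0. h 0)"
    by (intro sum.cong) (auto simp: Ridx_def intro!: Least_eq_0)
  then show ?case
    by (simp add: sum_constant_natmult)
next
  case (Suc R)
  let ?S = "\<lambda>R. \<Sum>r=0..R. nn N M n r"
  let ?block = "{?S R + 1..?S R + nn N M n (Suc R)}"
  have "(\<Sum>j=1..?S (Suc R). h (Ridx N M n j))
      = (\<Sum>j=1..?S R. h (Ridx N M n j)) + (\<Sum>j\<in>?block. h (Ridx N M n j))"
    unfolding sum.atLeast0_atMost_Suc by (rule sum.ub_add_nat) simp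
  also have "(\<Sum>j\<in>?block. h (Ridx N M n j)) = (\<Sum>j\<in>?block. h (Suc R))"
  proof (rule sum.cong)
    fix j assume "j \<in> ?block"
    then have "Ridx N M n j = Suc R"
      by (intro Ridx_eq_Suc) (auto simp: sum.atLeast0_atMost_Suc)
    then show "h (Ridx N M n j) = h (Suc R)"
      by simp
  qed simp
  finally show ?case
    using Suc by (simp add: sum_constant_natmult)
qed

lemma sum_alpha_eq:
  fixes g :: "'p::zero \<Rightarrow> 'a::comm_monoid_add"
  assumes "(\<Sum>r=1..M. n r) \<le> N"
  shows "(\<Sum>j=1..N. g (alpha N M n as j))
       = natmult (nn N M n 0) (g 0) + (\<Sum>r=1..M. natmult (n r) (g (as r)))"
proof -
  define h where "h r = (if r = 0 then g 0 else g (as r))" for r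
  have "(\<Sum>j=1..N. g (alpha N M n as j)) = (\<Sum>j=1..(\<Sum>r=0..M. nn N M n r). h (Ridx N M n j))"
    unfolding sum_nn_eq[OF assms] by (intro sum.cong) (auto simp: h_def alpha_def)
  also have "\<dots> = (\<Sum>r=0..M. natmult (nn N M n r) (h r))"
    by (rule sum_Ridx_blocks)
  also have "\<dots> = natmult (nn N M n 0) (h 0) + (\<Sum>r=Suc 0..M. natmult (nn N M n r) (h r))"
    by (rule sum.atLeast_Suc_atMost) simp
  also have "(\<Sum>r=Suc 0..M. natmult (nn N M n r) (h r)) = (\<Sum>r=1..M. natmult (n r) (g (as r)))"
    by (intro sum.cong) (auto simp: nn_def h_def)
  finally show ?thesis
    by (simp add: h_def)
qed

lemma alpha_mod_mem_meas:
  assumes "(\<Sum>r=1..M. n r) \<le> N" "i \<in> {1..N}"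
  shows "(i, alpha_mod N M n as k) \<in> meas N M as"
proof -
  have "0 < N"
    using assms(2) by simp
  then have "(k - 1) mod N + 1 \<le> N"
    using mod_less_divisor[of N "k - 1"] by linarith
  then have "Ridx N M n ((k - 1) mod N + 1) \<le> M"
    using Ridx_le[OF assms(1)] by blast
  with assms(2) show ?thesis
    unfolding meas_def alpha_mod_def alpha_def by auto
qed

lemma ctx_subset_meas:
  assumes "(\<Sum>r=1..M. n r) \<le> N"
  shows "ctx N M n as c \<subseteq> meas N M as"
  using alpha_mod_mem_meas[OF assms] by (auto simp: ctx_def meas_def split: mctx.splits)

lemma sum_ctx_Control:
  fixes as :: "nat \<Rightarrow> 'p::zero"
  shows "sum F (ctx N M n as Control) = (\<Sum>i=1..N. F (i, 0))"
proof -
  have "ctx N M n as Control = (\<lambda>i. (i, 0)) ` {1..N}"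
    by (auto simp: ctx_def)
  moreover have "inj_on (\<lambda>i. (i, 0::'p)) {1..N}"
    by (auto simp: inj_on_def)
  ultimately show ?thesis
    by (simp add: sum.reindex)
qed

lemma sum_ctx_Var:
  "sum F (ctx N M n as (Var v)) = (\<Sum>i=1..N. F (i, alpha_mod N M n as (i + v - 1)))"
proof -
  have "ctx N M n as (Var v) = (\<lambda>i. (i, alpha_mod N M n as (i + v - 1))) ` {1..N}"
    by (auto simp: ctx_def)
  moreover have "inj_on (\<lambda>i. (i, alpha_mod N M n as (i + v - 1))) {1..N}"
    by (auto simp: inj_on_def)
  ultimately show ?thesis
    by (simp add: sum.reindex)
qed

definition mermin_target :: "'p::zero \<Rightarrow> mctx \<Rightarrow> 'p" where
  "mermin_target a c = (case c of Control \<Rightarrow> 0 | Var v \<Rightarrow> a)"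

lemma support_emp:
  assumes "bool_semiring_hom p" "p dinv"
  shows "support p K C (emp N M n as a dinv c)
       = {b \<in> C \<rightarrow>\<^sub>E K. sum b (ctx N M n as c) = mermin_target a c}"
proof -
  have "p (dinv ^ m)" for m
    using assms by (induct m) (auto simp: bool_semiring_hom_def)
  moreover have "\<not> p 0"
    using assms(1) by (simp add: bool_semiring_hom_def)
  ultimately show ?thesis
    unfolding support_def emp_def mermin_target_def by auto
qed

section \<open>Equations satisfied by the support\<close>

lemma sat_T_Z_solution_set_iff:
  fixes t :: "'p::ab_group_add"
  assumes "t \<in> K" "s \<in> C \<rightarrow>\<^sub>E K"
  shows "(\<forall>(m, b)\<in>T_Z K C {w \<in> C \<rightarrow>\<^sub>E K. sum w C = t}. sat_eq C m b s) \<longleftrightarrow> sum s C = t"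
proof
  have sat_ones: "sat_eq C (restrict (\<lambda>_. 1) C) t w \<longleftrightarrow> sum w C = t" for w :: "_ \<Rightarrow> 'p"
    unfolding sat_eq_def by (simp cong: sum.cong)
  assume "\<forall>(m, b)\<in>T_Z K C {w \<in> C \<rightarrow>\<^sub>E K. sum w C = t}. sat_eq C m b s"
  moreover have "(restrict (\<lambda>_. 1) C, t) \<in> T_Z K C {w \<in> C \<rightarrow>\<^sub>E K. sum w C = t}"
    using assms(1) unfolding T_Z_def by (simp add: sat_ones)
  ultimately show "sum s C = t"
    using sat_ones by fast
next
  assume "sum s C = t"
  with assms(2) show "\<forall>(m, b)\<in>T_Z K C {w \<in> C \<rightarrow>\<^sub>E K. sum w C = t}. sat_eq C m b s"
    unfolding T_Z_def by blast
qed

lemma AvN_ZK_mermin_iff: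
  assumes "bool_semiring_hom p" "p dinv" "0 \<in> K" "a \<in> K" "(\<Sum>r=1..M. n r) \<le> N"
  shows "AvN_ZK K (meas N M as) (ctxs N) (ctx N M n as) (emp N M n as a dinv) p
     \<longleftrightarrow> \<not> (\<exists>s\<in>meas N M as \<rightarrow>\<^sub>E K. \<forall>c\<in>ctxs N. sum s (ctx N M n as c) = mermin_target a c)"
proof -
  have "(\<forall>(m, b)\<in>T_Z K (ctx N M n as c) (support p K (ctx N M n as c) (emp N M n as a dinv c)).
           sat_eq (ctx N M n as c) m b (restrict s (ctx N M n as c)))
        \<longleftrightarrow> sum s (ctx N M n as c) = mermin_target a c"
    if s: "s \<in> meas N M as \<rightarrow>\<^sub>E K" for s c
  proof -
    have "restrict s (ctx N M n as c) \<in> ctx N M n as c \<rightarrow>\<^sub>E K"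
      using s ctx_subset_meas[OF assms(5)] by auto
    moreover have "mermin_target a c \<in> K"
      using assms(3,4) by (simp add: mermin_target_def split: mctx.splits)
    ultimately show ?thesis
      unfolding support_emp[OF assms(1,2)]
      by (simp add: sat_T_Z_solution_set_iff cong: sum.cong)
  qed
  then show ?thesis
    unfolding AvN_ZK_def by auto
qed

section \<open>Global assignments versus solutions in K\<close>

lemma global_assignment_of_solution:
  assumes "is_subgroup K" "(\<Sum>r=1..M. n r) \<le> N"
    and "inj_on as {1..M}" "\<forall>r\<in>{1..M}. as r \<noteq> 0"
    and "\<forall>r\<in>{1..M}. y r \<in> K" "(\<Sum>r=1..M. natmult (n r) (y r)) = a"
  shows "\<exists>s\<in>meas N M as \<rightarrow>\<^sub>E K. \<forall>c\<in>ctxs N. sum s (ctx N M n as c) = mermin_target a c"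
proof -
  define f where "f c = (if c \<in> as ` {1..M} then y (the_inv_into {1..M} as c) else 0)" for c
  have f_as: "f (as r) = y r" if "r \<in> {1..M}" for r
    using the_inv_into_f_f[OF assms(3) that] that by (auto simp: f_def)
  have f_0: "f 0 = 0"
    using assms(4) by (auto simp: f_def)
  have "f c \<in> K" for c
    using assms(1,5) f_as by (cases "c \<in> as ` {1..M}") (auto simp: f_def is_subgroup_def)
  then have s_mem: "restrict (f \<circ> snd) (meas N M as) \<in> meas N M as \<rightarrow>\<^sub>E K"
    by simp
  have "sum (restrict (f \<circ> snd) (meas N M as)) (ctx N M n as c) = mermin_target a c"
    if "c \<in> ctxs N" for c
  proof (cases c)
    case Control
    then show ?thesis
      using f_0 by (simp add: sum_ctx_Control meas_def mermin_target_def)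
  next
    case (Var v)
    with that have "1 \<le> v"
      by (auto simp: ctxs_def)
    have "sum (restrict (f \<circ> snd) (meas N M as)) (ctx N M n as c)
        = (\<Sum>i=1..N. f (alpha_mod N M n as (i + v - 1)))"
      unfolding Var sum_ctx_Var using alpha_mod_mem_meas[OF assms(2)] by (intro sum.cong) auto
    also have "\<dots> = (\<Sum>j=1..N. f (alpha N M n as j))"
      by (rule sum_alpha_mod_shift[OF \<open>1 \<le> v\<close>])
    also have "\<dots> = natmult (nn N M n 0) (f 0) + (\<Sum>r=1..M. natmult (n r) (f (as r)))"
      by (rule sum_alpha_eq[OF assms(2)])
    also have "\<dots> = a"
      using assms(6) f_0 f_as by simp
    finally show ?thesis
      by (simp add: Var mermin_target_def)
  qed
  with s_mem show ?thesis
    by blast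
qed

lemma solution_of_global_assignment:
  assumes "finite K" "is_subgroup K" "a \<in> K" "(\<Sum>r=1..M. n r) \<le> N"
    and "N mod group_exponent K = 1 mod group_exponent K"
    and "s \<in> meas N M as \<rightarrow>\<^sub>E K" "\<forall>c\<in>ctxs N. sum s (ctx N M n as c) = mermin_target a c"
  shows "\<exists>y. (\<forall>r\<in>{1..M}. y r \<in> K) \<and> (\<Sum>r=1..M. natmult (n r) (y r)) = a"
proof -
  define y where "y r = (\<Sum>i=1..N. s (i, as r))" for r
  have control: "(\<Sum>i=1..N. s (i, 0)) = 0"
    using assms(7) by (simp add: ctxs_def mermin_target_def sum_ctx_Control)
  have var: "(\<Sum>i=1..N. s (i, alpha_mod N M n as (i + v - 1))) = a" if "v \<in> {1..N}" for v
    using assms(7) that by (simp add: ctxs_def mermin_target_def sum_ctx_Var)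
  have y_mem: "\<forall>r\<in>{1..M}. y r \<in> K"
    using assms(6) unfolding y_def
    by (auto intro!: subgroup_sum_closed[OF assms(2)] simp: meas_def)
  have "a = natmult N a"
    using natmult_congruent_one[OF assms(1-3,5)] by simp
  also have "\<dots> = (\<Sum>v=1..N. \<Sum>i=1..N. s (i, alpha_mod N M n as (i + v - 1)))"
    using var by (simp add: sum_constant_natmult)
  also have "\<dots> = (\<Sum>i=1..N. \<Sum>v=1..N. s (i, alpha_mod N M n as (v + i - 1)))"
    by (subst sum.swap) (simp add: add.commute)
  also have "\<dots> = (\<Sum>i=1..N. \<Sum>j=1..N. s (i, alpha N M n as j))"
    by (intro sum.cong refl sum_alpha_mod_shift) auto
  also have "\<dots> = (\<Sum>i=1..N. natmult (nn N M n 0) (s (i, 0)) + (\<Sum>r=1..M. natmult (n r) (s (i, as r))))"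
    by (intro sum.cong refl sum_alpha_eq[OF assms(4)])
  also have "\<dots> = natmult (nn N M n 0) (\<Sum>i=1..N. s (i, 0)) + (\<Sum>r=1..M. natmult (n r) (y r))"
    unfolding sum.distrib natmult_sum y_def by (subst sum.swap) simp
  also have "\<dots> = (\<Sum>r=1..M. natmult (n r) (y r))"
    using control by simp
  finally show ?thesis
    using y_mem by auto
qed

text \<open>Only \<open>p (1/d)\<close> is used about the semiring.\<close>
theorem mainTheorem2:
  fixes invol :: "'r::comm_semiring_1 \<Rightarrow> 'r"
    and p :: "'r \<Rightarrow> bool"
    and dinv :: 'r
    and K :: "'p::ab_group_add set"
    and M N :: nat
    and n :: "nat \<Rightarrow> nat"
    and as :: "nat \<Rightarrow> 'p"
    and a :: 'p
  assumes "involutive_semiring invol"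
    and "(0::'r) \<noteq> 1"
    and "finite K" and "is_subgroup K"
    and "of_nat (card K) * dinv = 1"
    and "bool_semiring_hom p" and "p dinv"
    and "\<forall>r\<in>{1..M}. 0 < n r"
    and "a \<in> K"
    and "(\<Sum>r=1..M. natmult (n r) (as r)) = a"
    and "inj_on as {1..M}"
    and "\<forall>r\<in>{1..M}. as r \<noteq> 0"
    and "N \<ge> (\<Sum>r=1..M. n r)"
    and "N mod group_exponent K = 1 mod group_exponent K"
  shows "AvN_ZK K (meas N M as) (ctxs N) (ctx N M n as) (emp N M n as a dinv) p
     \<longleftrightarrow> \<not> (\<exists>y. (\<forall>r\<in>{1..M}. y r \<in> K) \<and> (\<Sum>r=1..M. natmult (n r) (y r)) = a)"
proof -
  have "0 \<in> K"
    using \<open>is_subgroup K\<close> by (simp add: is_subgroup_def)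
  have global_iff: "(\<exists>s\<in>meas N M as \<rightarrow>\<^sub>E K. \<forall>c\<in>ctxs N. sum s (ctx N M n as c) = mermin_target a c)
      \<longleftrightarrow> (\<exists>y. (\<forall>r\<in>{1..M}. y r \<in> K) \<and> (\<Sum>r=1..M. natmult (n r) (y r)) = a)"
  proof
    assume "\<exists>s\<in>meas N M as \<rightarrow>\<^sub>E K. \<forall>c\<in>ctxs N. sum s (ctx N M n as c) = mermin_target a c"
    then show "\<exists>y. (\<forall>r\<in>{1..M}. y r \<in> K) \<and> (\<Sum>r=1..M. natmult (n r) (y r)) = a"
      using solution_of_global_assignment[OF assms(3,4,9,13,14)] by blast
  next
    assume "\<exists>y. (\<forall>r\<in>{1..M}. y r \<in> K) \<and> (\<Sum>r=1..M. natmult (n r) (y r)) = a"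
    then show "\<exists>s\<in>meas N M as \<rightarrow>\<^sub>E K. \<forall>c\<in>ctxs N. sum s (ctx N M n as c) = mermin_target a c"
      using global_assignment_of_solution[OF assms(4,13,11,12)] by blast
  qed
  show ?thesis
    by (simp only: AvN_ZK_mermin_iff[OF assms(6,7) \<open>0 \<in> K\<close> assms(9,13)] global_iff)
qed

end
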